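(* A class $\mathcal{C}$ of digraphs without parallel edges has bounded directed branch-width if and only if the class $\{\vec{L}(D): D\in\mathcal{C}\}$ of their directed line graphs has bounded bi-cut-rank-width. More precisely, for every digraph $D$ without parallel edges, \[\frac{\operatorname{bcrk}(\vec{L}(D))}{2} - 1 \;\le\; \operatorname{dbw}(D) \;\le\; 8\bigl(1 + 2^{\operatorname{bcrk}(\vec{L}(D))}\bigr).\]
   Context: All digraphs are finite and loopless; $\vec{xy}$ denotes a directed edge from $x$ to $y$. A layout of a symmetric function $f:2^U\to\mathbb{Z}$ (symmetric means $f(X)=f(U\setminus X)$) on a finite set $U$ is a pair $(T,\beta)$ with $T$ a tree of maximum degree at most three and $\beta$ a bijection from the leaves of $T$ to $U$. Each edge $xy$ of $T$ splits the leaves into those in the component of $T-xy$ containing $y$ (call this set $Y$) and the rest; the order of $xy$ is $f(\beta(Y))$. The width of the layout is the maximum order of an edge of $T$ (0 if $T$ has no edges), and the layout-$f$-width of $U$ is the minimum width over all layouts of $f$ on $U$. Directed branch-width: for a digraph $D$ and $X\subseteq E(D)$, let $S^V_X=\{y\in V(D): \exists x,z \text{ with } \vec{xy}\in E(D)\setminus X \text{ and } \vec{yz}\in X\}$, and $f_D(X)=|S^V_X\cup S^V_{E(D)\setminus X}|$. A directed branch decomposition of $D$ is a layout of $f_D$ on $E(D)$, and $\operatorname{dbw}(D)$ is the layout-$f_D$-width of $E(D)$. Directed line graph: $\vec{L}(D)$ has vertex set $E(D)$ and an edge $\vec{ef}$ whenever there are vertices $w,x,y$ of $D$ with $e=\vec{wx}$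 and $f=\vec{xy}$. Bi-cut-rank-width: for a digraph $D$ with adjacency matrix $M$ over $\mathrm{GF}(2)$ (rows/columns indexed by $V(D)$, $M_{uv}=1$ iff $\vec{uv}\in E(D)$), let $g(X)=\operatorname{rk}(M[V(D)\setminus X, X])+\operatorname{rk}(M[X,V(D)\setminus X])$, where $M[A,B]$ is the submatrix with rows in $A$ and columns in $B$. Then $\operatorname{bcrk}(D)$ is the layout-$g$-width of $V(D)$. *)

theory Defs
  imports Complex_Main "HOL-Library.Z2" "HOL-Library.Function_Algebras"
begin

text \<open>An (undirected) graph on node set N with symmetric adjacency relation A
  (both orientations of every edge are in A).  Nodes of layout trees are
  natural numbers (every finite tree is isomorphic to one on natural numbers).\<close>

definition nbrs :: "(nat \<times> nat) set \<Rightarrow> nat \<Rightarrow> nat set" where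
  "nbrs A v = {w. (v, w) \<in> A}"

text \<open>A tree: finite, nonempty, loopless, symmetric, connected, and every edge is
  a bridge (i.e. minimally connected, equivalently acyclic).\<close>
definition is_tree :: "nat set \<Rightarrow> (nat \<times> nat) set \<Rightarrow> bool" where
  "is_tree N A \<longleftrightarrow> finite N \<and> N \<noteq> {} \<and> A \<subseteq> N \<times> N \<and> sym A \<and> (\<forall>v. (v, v) \<notin> A)
     \<and> (\<forall>x\<in>N. \<forall>y\<in>N. (x, y) \<in> A\<^sup>*)
     \<and> (\<forall>(x, y)\<in>A. (x, y) \<notin> (A - {(x, y), (y, x)})\<^sup>*)"

definition subcubic :: "nat set \<Rightarrow> (nat \<times> nat) set \<Rightarrow> bool" where
  "subcubic N A \<longleftrightarrow> (\<forall>v\<in>N. card (nbrs A v) \<le> 3)"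

text \<open>Leaves: nodes of degree at most one (degree 0 only occurs in the one-node tree).\<close>
definition leaves :: "nat set \<Rightarrow> (nat \<times> nat) set \<Rightarrow> nat set" where
  "leaves N A = {v \<in> N. card (nbrs A v) \<le> 1}"

definition side :: "nat set \<Rightarrow> (nat \<times> nat) set \<Rightarrow> nat \<Rightarrow> nat \<Rightarrow> nat set" where
  "side N A x y = {z \<in> leaves N A. (y, z) \<in> (A - {(x, y), (y, x)})\<^sup>*}"

definition layout :: "'u set \<Rightarrow> nat set \<Rightarrow> (nat \<times> nat) set \<Rightarrow> (nat \<Rightarrow> 'u) \<Rightarrow> bool" where
  "layout U N A \<beta> \<longleftrightarrow> is_tree N A \<and> subcubic N A \<and> bij_betw \<beta> (leaves N A) U"

text \<open>Width of a layout: maximum order of an edge (0 if there are no edges).\<close>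
definition layout_width ::
    "('u set \<Rightarrow> nat) \<Rightarrow> nat set \<Rightarrow> (nat \<times> nat) set \<Rightarrow> (nat \<Rightarrow> 'u) \<Rightarrow> nat" where
  "layout_width f N A \<beta> = Sup {f (\<beta> ` side N A x y) | x y. (x, y) \<in> A}"

text \<open>Layout-f-width of U: minimum width over all layouts (0 for U = {}, where
  no layout exists).\<close>
definition lwidth :: "('u set \<Rightarrow> nat) \<Rightarrow> 'u set \<Rightarrow> nat" where
  "lwidth f U = (if U = {} then 0 else
     Inf {layout_width f N A \<beta> | N A \<beta>. layout U N A \<beta>})"

text \<open>A digraph is a finite vertex set V with an edge set E \<subseteq> V \<times> V of ordered
  pairs; this representation has no parallel edges.  Loopless: no (x,x).\<close>
definition digraph :: "'a set \<Rightarrow> ('a \<times> 'a) set \<Rightarrow> bool" where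
  "digraph V E \<longleftrightarrow> finite V \<and> E \<subseteq> V \<times> V \<and> (\<forall>x. (x, x) \<notin> E)"

definition SV :: "'a set \<Rightarrow> ('a \<times> 'a) set \<Rightarrow> ('a \<times> 'a) set \<Rightarrow> 'a set" where
  "SV V E X = {y \<in> V. \<exists>x z. (x, y) \<in> E - X \<and> (y, z) \<in> X}"

definition fD :: "'a set \<Rightarrow> ('a \<times> 'a) set \<Rightarrow> ('a \<times> 'a) set \<Rightarrow> nat" where
  "fD V E X = card (SV V E X \<union> SV V E (E - X))"

definition dbw :: "'a set \<Rightarrow> ('a \<times> 'a) set \<Rightarrow> nat" where
  "dbw V E = lwidth (fD V E) E"

definition line_vertices :: "('a \<times> 'a) set \<Rightarrow> ('a \<times> 'a) set" where
  "line_vertices E = E"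

definition line_edges :: "('a \<times> 'a) set \<Rightarrow> (('a \<times> 'a) \<times> ('a \<times> 'a)) set" where
  "line_edges E = {(e, f). \<exists>w x y. e = (w, x) \<and> f = (x, y) \<and> e \<in> E \<and> f \<in> E}"

text \<open>Rank over GF(2) (type bit) of the submatrix M[R,C] of the adjacency matrix:
  the dimension of the span of its rows, each row being a function C \<rightarrow> GF(2)
  (extended by 0 outside C), in the GF(2)-vector space of functions with
  pointwise scalar multiplication.\<close>
definition gf2_scale :: "bit \<Rightarrow> ('a \<Rightarrow> bit) \<Rightarrow> ('a \<Rightarrow> bit)" where
  "gf2_scale c v = (\<lambda>i. c * v i)"

definition adj_row :: "('a \<times> 'a) set \<Rightarrow> 'a set \<Rightarrow> 'a \<Rightarrow> ('a \<Rightarrow> bit)" where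
  "adj_row E C u = (\<lambda>v. if v \<in> C \<and> (u, v) \<in> E then 1 else 0)"

definition rk2 :: "('a \<times> 'a) set \<Rightarrow> 'a set \<Rightarrow> 'a set \<Rightarrow> nat" where
  "rk2 E R C = vector_space.dim gf2_scale (adj_row E C ` R)"

definition cutrank_g :: "'a set \<Rightarrow> ('a \<times> 'a) set \<Rightarrow> 'a set \<Rightarrow> nat" where
  "cutrank_g V E X = rk2 E (V - X) X + rk2 E X (V - X)"

definition bcrk :: "'a set \<Rightarrow> ('a \<times> 'a) set \<Rightarrow> nat" where
  "bcrk V E = lwidth (cutrank_g V E) V"

lemma gf2_vector_space: "vector_space gf2_scale"
  unfolding gf2_scale_def plus_fun_def
  by unfold_locales (simp_all only: fun_eq_iff plus_fun_def distrib_left distrib_right mult.assoc mult_1_left, simp_all)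

end

theory Submission
  imports Defs
begin

text \<open>In the adjacency matrix of the directed line graph, the row of an edge \<open>(x, y)\<close>
  restricted to columns \<open>X \<subseteq> E\<close> depends only on the head \<open>y\<close>: it is the indicator of the edges
  of \<open>X\<close> leaving \<open>y\<close>. It vanishes unless \<open>y\<close> has an out-edge in \<open>X\<close>, and the nonzero rows for
  distinct heads are independent. Hence \<open>rk M[E - X, X]\<close> is exactly the number of vertices
  with an in-edge outside \<open>X\<close> and an out-edge in \<open>X\<close>, i.e. \<open>|SV V E X|\<close>, so the bi-cut-rank of
  \<open>X\<close> is \<open>|SV V E X| + |SV V E (E - X)|\<close>. This lies between \<open>f\<^sub>D(X)\<close> and \<open>2 f\<^sub>D(X)\<close>, giving
  \<open>dbw(D) \<le> bcrk(L(D)) \<le> 2 dbw(D)\<close>.\<close>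

interpretation gf2: vector_space gf2_scale
  by (rule gf2_vector_space)

lemma sum_apply: "(sum F A :: 'a \<Rightarrow> 'b::comm_monoid_add) i = (\<Sum>v\<in>A. F v i)"
  by (induction A rule: infinite_finite_induct) (auto simp: plus_fun_def)

lemma gf2_independent_if_unique_coordinates:
  assumes "\<And>v. v \<in> B \<Longrightarrow> \<exists>i. v i = 1 \<and> (\<forall>w\<in>B - {v}. w i = 0)"
  shows "gf2.independent B"
  unfolding gf2.independent_explicit_module
proof (intro allI impI)
  fix T u v
  assume T: "finite T" "T \<subseteq> B" and zero: "(\<Sum>w\<in>T. gf2_scale (u w) w) = 0" and "v \<in> T"
  obtain i where i: "v i = 1" "\<forall>w\<in>B - {v}. w i = 0" using assms \<open>v \<in> T\<close> T(2) by blast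
  have "0 = (\<Sum>w\<in>T. u w * w i)"
    using fun_cong[OF zero, of i] by (simp add: sum_apply gf2_scale_def)
  also have "\<dots> = u v * v i"
  proof -
    have "(\<Sum>w\<in>T - {v}. u w * w i) = 0" using i T by (intro sum.neutral) auto
    then show ?thesis by (simp add: sum.remove[OF T(1) \<open>v \<in> T\<close>])
  qed
  finally show "u v = 0" using i by simp
qed

lemma adj_row_line_edges:
  assumes "X \<subseteq> E" "(x, y) \<in> E"
  shows "adj_row (line_edges E) X (x, y) = (\<lambda>f. if f \<in> X \<and> fst f = y then 1 else 0)"
  using assms unfolding adj_row_def line_edges_def by (auto simp: fun_eq_iff)

lemma rk2_line_edges:
  assumes "finite V" "E \<subseteq> V \<times> V" "X \<subseteq> E"
  shows "rk2 (line_edges E) (E - X) X = card (SV V E X)"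
proof -
  define r where "r y = (\<lambda>f. if f \<in> X \<and> fst f = y then 1 else 0 :: bit)" for y
  define S where "S = SV V E X"
  let ?rows = "adj_row (line_edges E) X ` (E - X)"
  have out_edge: "\<exists>z. (y, z) \<in> X" if "y \<in> S" for y
    using that unfolding S_def SV_def by auto
  have coordinate: "r y (y, z) = 1 \<and> (\<forall>y'. y' \<noteq> y \<longrightarrow> r y' (y, z) = 0)" if "(y, z) \<in> X" for y z
    using that unfolding r_def by auto
  have inj: "inj_on r S"
  proof
    fix y y' assume "y \<in> S" "y' \<in> S" "r y = r y'"
    then obtain z where "(y, z) \<in> X" using out_edge by blast
    with coordinate \<open>r y = r y'\<close> show "y = y'" by (metis zero_neq_one)
  qed
  have indep: "gf2.independent (r ` S)"
  proof (rule gf2_independent_if_unique_coordinates)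
    fix v assume "v \<in> r ` S"
    then obtain y z where v: "v = r y" and "(y, z) \<in> X" using out_edge by blast
    have "w (y, z) = 0" if "w \<in> r ` S - {v}" for w
      using that v coordinate[OF \<open>(y, z) \<in> X\<close>] by auto
    then show "\<exists>i. v i = 1 \<and> (\<forall>w\<in>r ` S - {v}. w i = 0)"
      using v coordinate[OF \<open>(y, z) \<in> X\<close>] by blast
  qed
  have "?rows \<subseteq> insert 0 (r ` S)"
  proof
    fix a assume "a \<in> ?rows"
    then obtain x y where xy: "(x, y) \<in> E - X" "a = r y"
      using adj_row_line_edges[OF \<open>X \<subseteq> E\<close>] unfolding r_def by force
    show "a \<in> insert 0 (r ` S)"
    proof (cases "y \<in> S")
      case False
      then have "a = 0"
        using xy assms(2,3) unfolding r_def S_def SV_def by (auto simp: fun_eq_iff)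
      then show ?thesis by simp
    qed (use xy in simp)
  qed
  moreover have "r ` S \<subseteq> ?rows"
  proof
    fix a assume "a \<in> r ` S"
    then obtain x y where "a = r y" "(x, y) \<in> E - X"
      unfolding S_def SV_def by blast
    then show "a \<in> ?rows"
      using adj_row_line_edges[OF \<open>X \<subseteq> E\<close>] unfolding r_def by force
  qed
  ultimately have "gf2.span (r ` S) = gf2.span ?rows"
    by (metis gf2.span_eq gf2.span_insert_0 gf2.span_superset subset_trans)
  then have "rk2 (line_edges E) (E - X) X = card (r ` S)"
    unfolding rk2_def by (rule gf2.dim_eq_card[OF _ indep])
  then show ?thesis using card_image[OF inj] by (simp add: S_def)
qed

lemma cutrank_line_graph:
  assumes "finite V" "E \<subseteq> V \<times> V" "X \<subseteq> E"
  shows "cutrank_g (line_vertices E) (line_edges E) X = card (SV V E X) + card (SV V E (E - X))"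
proof -
  have "rk2 (line_edges E) X (E - X) = rk2 (line_edges E) (E - (E - X)) (E - X)"
    using \<open>X \<subseteq> E\<close> by (simp add: double_diff)
  also have "\<dots> = card (SV V E (E - X))"
    using assms by (intro rk2_line_edges) auto
  finally show ?thesis
    using rk2_line_edges[OF assms] by (simp add: cutrank_g_def line_vertices_def)
qed

lemma fD_le_cutrank_line_graph:
  assumes "finite V" "E \<subseteq> V \<times> V" "X \<subseteq> E"
  shows "fD V E X \<le> cutrank_g (line_vertices E) (line_edges E) X"
  unfolding fD_def cutrank_line_graph[OF assms] by (rule card_Un_le)

lemma cutrank_line_graph_le_fD:
  assumes "finite V" "E \<subseteq> V \<times> V" "X \<subseteq> E"
  shows "cutrank_g (line_vertices E) (line_edges E) X \<le> 2 * fD V E X"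
proof -
  have "finite (SV V E X \<union> SV V E (E - X))"
    using \<open>finite V\<close> unfolding SV_def by auto
  then have "card (SV V E X) \<le> fD V E X" "card (SV V E (E - X)) \<le> fD V E X"
    unfolding fD_def by (auto intro: card_mono)
  then show ?thesis unfolding cutrank_line_graph[OF assms] by simp
qed

lemma layout_width_le_comp:
  assumes "layout U N A \<beta>" "mono h" "\<And>X. X \<subseteq> U \<Longrightarrow> g X \<le> h (f X)"
  shows "layout_width g N A \<beta> \<le> h (layout_width f N A \<beta>)"
proof -
  have "finite A"
    using assms(1) unfolding layout_def is_tree_def by (meson finite_SigmaI finite_subset)
  have side_sub: "\<beta> ` side N A x y \<subseteq> U" for x y
    using assms(1) unfolding layout_def bij_betw_def side_def by auto
  let ?F = "{f (\<beta> ` side N A x y) | x y. (x, y) \<in> A}"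
  have "?F = (\<lambda>(x, y). f (\<beta> ` side N A x y)) ` A" by auto
  with \<open>finite A\<close> have "finite ?F" by simp
  show ?thesis
  proof (cases "A = {}")
    case True
    then show ?thesis by (simp add: layout_width_def Sup_nat_def)
  next
    case False
    show ?thesis
      unfolding layout_width_def
    proof (rule cSup_least)
      show "{g (\<beta> ` side N A x y) | x y. (x, y) \<in> A} \<noteq> {}" using False by auto
    next
      fix n assume "n \<in> {g (\<beta> ` side N A x y) | x y. (x, y) \<in> A}"
      then obtain x y where "(x, y) \<in> A" "n = g (\<beta> ` side N A x y)" by blast
      then have "n \<le> h (f (\<beta> ` side N A x y))" using assms(3) side_sub by simp
      also have "\<dots> \<le> h (Sup ?F)"
        using \<open>(x, y) \<in> A\<close> \<open>finite ?F\<close> by (intro monoD[OF \<open>mono h\<close>] le_cSup_finite) auto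
      finally show "n \<le> h (Sup ?F)" .
    qed
  qed
qed

text \<open>The hypothesis \<open>n \<le> h n\<close> covers the case without layouts, where both widths are the
  unspecified value \<open>Inf {}\<close>.\<close>

lemma lwidth_le_comp:
  assumes "mono h" "\<And>n. n \<le> h n" "\<And>X. X \<subseteq> U \<Longrightarrow> g X \<le> h (f X)"
  shows "lwidth g U \<le> h (lwidth f U)"
proof (cases "U = {} \<or> (\<nexists>N A \<beta>. layout U N A \<beta>)")
  case True
  then show ?thesis unfolding lwidth_def using assms(2) by auto
next
  case False
  let ?W = "\<lambda>f. {layout_width f N A \<beta> | N A \<beta>. layout U N A \<beta>}"
  have "Inf (?W f) \<in> ?W f" using False by (intro Inf_nat_def1) auto
  then obtain N A \<beta> where L: "layout U N A \<beta>" and "Inf (?W f) = layout_width f N A \<beta>" by blast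
  then have "lwidth f U = layout_width f N A \<beta>" using False by (simp add: lwidth_def)
  moreover have "lwidth g U \<le> layout_width g N A \<beta>"
    using False L unfolding lwidth_def by (auto intro: cInf_lower)
  ultimately show ?thesis using layout_width_le_comp[of U N A \<beta> h g f, OF L assms(1,3)] by simp
qed

lemma dbw_le_bcrk_line_graph:
  assumes "digraph V E"
  shows "dbw V E \<le> bcrk (line_vertices E) (line_edges E)"
  using assms fD_le_cutrank_line_graph[of V E]
  unfolding dbw_def bcrk_def digraph_def line_vertices_def
  by (intro lwidth_le_comp[where h = "\<lambda>n. n"]) (auto simp: mono_def)

lemma bcrk_line_graph_le_dbw:
  assumes "digraph V E"
  shows "bcrk (line_vertices E) (line_edges E) \<le> 2 * dbw V E"
  using assms cutrank_line_graph_le_fD[of V E]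
  unfolding dbw_def bcrk_def digraph_def line_vertices_def
  by (intro lwidth_le_comp[where h = "(*) 2"]) (auto simp: mono_def)

theorem mainTheorem1:
  fixes V :: "'a set" and E :: "('a \<times> 'a) set"
  assumes "digraph V E"
  shows "real (bcrk (line_vertices E) (line_edges E)) / 2 - 1 \<le> real (dbw V E)
       \<and> dbw V E \<le> 8 * (1 + 2 ^ bcrk (line_vertices E) (line_edges E))"
proof
  let ?b = "bcrk (line_vertices E) (line_edges E)"
  show "real ?b / 2 - 1 \<le> real (dbw V E)"
    using bcrk_line_graph_le_dbw[OF assms] by linarith
  have "dbw V E \<le> ?b" by (rule dbw_le_bcrk_line_graph[OF assms])
  also have "?b < 2 ^ ?b" by (rule less_exp)
  finally show "dbw V E \<le> 8 * (1 + 2 ^ ?b)" by simp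
qed

end
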